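(* For every $k,s\in\mathbb{N}$, $$\mathbf{E}\bigl|V_G^s(k)\setminus V_X^s(k)\bigr|\le 4\,s\,k^2/(n-1).$$
   Context: Let $V=\{1,\dots,n\}$, $T_1,T_2,\dots$ i.i.d. uniformly random transpositions of $V$, and $\pi_s=T_s\circ\cdots\circ T_1$. Let $G^s$ be the graph on $V$ whose edges are the pairs $\{u,v\}$ such that $(u,v)$ appears among $T_1,\dots,T_s$. $V_G^s(k)\subset V$ denotes the union of the connected components of $G^s$ with at least $k$ vertices, and $V_X^s(k)\subset V$ denotes the union of the cycles of $\pi_s$ with at least $k$ elements. *)

theory Defs
  imports "HOL-Probability.Probability" "HOL-Combinatorics.Combinatorics"
begin

text \<open>Vertex set V = {1..n}. A transposition of V is encoded as an ordered pair (a,b)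
  with 1 \<le> a < b \<le> n, standing for the permutation swapping a and b.\<close>

definition transps :: "nat \<Rightarrow> (nat \<times> nat) set" where
  "transps n = {(a, b). 1 \<le> a \<and> a < b \<and> b \<le> n}"

definition transp_perm :: "nat \<times> nat \<Rightarrow> nat \<Rightarrow> nat" where
  "transp_perm t = Transposition.transpose (fst t) (snd t)"

text \<open>pi_s = T_s o ... o T_1 for the list ts = [T_1, ..., T_s].\<close>
definition perm_of :: "(nat \<times> nat) list \<Rightarrow> nat \<Rightarrow> nat" where
  "perm_of ts = fold (\<lambda>t p. transp_perm t \<circ> p) ts id"

definition edge_rel :: "(nat \<times> nat) list \<Rightarrow> (nat \<times> nat) set" where
  "edge_rel ts = {(x, y). \<exists>t \<in> set ts. {x, y} = {fst t, snd t}}"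

definition component :: "(nat \<times> nat) list \<Rightarrow> nat \<Rightarrow> nat set" where
  "component ts x = {y. (x, y) \<in> (edge_rel ts)\<^sup>*}"

definition VG :: "nat \<Rightarrow> (nat \<times> nat) list \<Rightarrow> nat \<Rightarrow> nat set" where
  "VG n ts k = {x \<in> {1..n}. card (component ts x) \<ge> k}"

definition VX :: "nat \<Rightarrow> (nat \<times> nat) list \<Rightarrow> nat \<Rightarrow> nat set" where
  "VX n ts k = {x \<in> {1..n}. card (orbit (perm_of ts) x) \<ge> k}"

definition transp_seq_pmf :: "nat \<Rightarrow> nat \<Rightarrow> (nat \<times> nat) list pmf" where
  "transp_seq_pmf n s = replicate_pmf s (pmf_of_set (transps n))"

end

theory Submission
  imports Defs
begin

text \<open>Call a cycle of \<pi>_s proper if it is strictly contained in its component of G^s.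
  Every vertex of V_G^s(k) - V_X^s(k) lies in a proper cycle with fewer than k elements, so
  |V_G^s(k) - V_X^s(k)| is at most k times the number \<Psi>_s of small proper cycles.
  Passing to \<pi>_(s+1) = (a b) \<circ> \<pi>_s either merges the cycles of a and b, which cannot
  increase \<Psi>, or splits one cycle into two fragments, and then only the fragments can be new
  small proper cycles. Give each vertex the weight 1/|C| of its small fragment C, if any. For a
  fixed vertex x and j < k, at most j of the n(n-1)/2 transpositions split off a fragment of
  size j containing x, so the expected total weight, and hence the expected increase of \<Psi>,
  is at most n k / (n(n-1)/2) = 2k/(n-1). Thus E \<Psi>_s \<le> 2sk/(n-1) and
  E |V_G^s(k) - V_X^s(k)| \<le> 2sk^2/(n-1).\<close>

section \<open>Expectations over i.i.d. sequences\<close>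

lemma replicate_pmf_Suc_snoc:
  "replicate_pmf (Suc n) p = replicate_pmf n p \<bind> (\<lambda>xs. map_pmf (\<lambda>x. xs @ [x]) p)"
proof -
  have "replicate_pmf (n + 1) p
      = replicate_pmf n p \<bind> (\<lambda>xs. replicate_pmf 1 p \<bind> (\<lambda>ys. return_pmf (xs @ ys)))"
    by (rule replicate_pmf_distrib)
  then show ?thesis
    by (simp add: replicate_pmf_1 map_pmf_def bind_assoc_pmf bind_return_pmf)
qed

lemma finite_set_replicate_pmf:
  assumes "finite (set_pmf p)"
  shows "finite (set_pmf (replicate_pmf n p))"
proof -
  have "set_pmf (replicate_pmf n p) = {xs. set xs \<subseteq> set_pmf p \<and> length xs = n}"
    by (auto simp: set_replicate_pmf)
  then show ?thesis
    using finite_lists_length_eq[OF assms] by simp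
qed

lemma expectation_replicate_pmf_of_set_le:
  fixes g :: "'a list \<Rightarrow> real"
  assumes T: "finite T" "T \<noteq> {}" and g_Nil: "g [] \<le> 0"
    and step: "\<And>xs. set xs \<subseteq> T \<Longrightarrow> (\<Sum>x\<in>T. g (xs @ [x])) / card T \<le> g xs + c"
  shows "measure_pmf.expectation (replicate_pmf s (pmf_of_set T)) g \<le> s * c"
proof (induction s)
  case 0
  then show ?case using g_Nil by simp
next
  case (Suc s)
  let ?R = "replicate_pmf s (pmf_of_set T)"
  define A where "A = set_pmf ?R"
  have fin: "finite A"
    unfolding A_def using T by (intro finite_set_replicate_pmf) simp
  have A_lists: "set xs \<subseteq> T" if "xs \<in> A" for xs
    using that T by (auto simp: A_def set_replicate_pmf)
  have "measure_pmf.expectation (replicate_pmf (Suc s) (pmf_of_set T)) g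
      = (\<Sum>xs\<in>A. pmf ?R xs *\<^sub>R measure_pmf.expectation (map_pmf (\<lambda>x. xs @ [x]) (pmf_of_set T)) g)"
    unfolding replicate_pmf_Suc_snoc
    by (rule pmf_expectation_bind[OF fin]) (use T in \<open>auto simp: A_def\<close>)
  also have "\<dots> = (\<Sum>xs\<in>A. pmf ?R xs * ((\<Sum>x\<in>T. g (xs @ [x])) / card T))"
    using T by (simp add: integral_pmf_of_set)
  also have "\<dots> \<le> (\<Sum>xs\<in>A. pmf ?R xs * (g xs + c))"
    by (intro sum_mono mult_left_mono step A_lists) auto
  also have "\<dots> = (\<Sum>xs\<in>A. pmf ?R xs * g xs) + c * (\<Sum>xs\<in>A. pmf ?R xs)"
    by (simp add: algebra_simps sum.distrib sum_distrib_left)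
  also have "(\<Sum>xs\<in>A. pmf ?R xs) = 1"
    using fin by (simp add: A_def sum_pmf_eq_1)
  also have "(\<Sum>xs\<in>A. pmf ?R xs * g xs) = measure_pmf.expectation ?R g"
    by (subst integral_measure_pmf[OF fin]) (auto simp: A_def)
  finally show ?case
    using Suc.IH by (simp add: algebra_simps)
qed

section \<open>Cycles of a permutation composed with a transposition\<close>

lemma orbit_eq_of_mem:
  assumes "permutation p" "y \<in> orbit p x"
  shows "orbit p y = orbit p x"
  using assms by (metis cyclic_on_orbit' orbit_cyclic_eq3)

lemma orbit_subset_of_closed:
  assumes "x \<in> S" "\<And>y. y \<in> S \<Longrightarrow> f y \<in> S"
  shows "orbit f x \<subseteq> S"
proof
  fix y assume "y \<in> orbit f x"
  then show "y \<in> S" by induct (use assms in auto)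
qed

lemma permutation_transpose_comp:
  "permutation p \<Longrightarrow> permutation (Transposition.transpose a b \<circ> p)"
  by (simp add: permutation_compose permutation_swap_id)

lemma orbit_transpose_comp_eq:
  assumes p: "permutation p" and "a \<notin> orbit p x" "b \<notin> orbit p x"
  shows "orbit (Transposition.transpose a b \<circ> p) x = orbit p x"
proof (rule orbit_cong[OF permutation_self_in_orbit[OF p]])
  fix y assume "y \<in> orbit p x"
  then have "p y \<in> orbit p x" by (rule orbit.step)
  then show "(Transposition.transpose a b \<circ> p) y = p y"
    using assms by (auto simp: transpose_eq_iff)
qed

lemma orbit_subset_orbit_transpose_comp:
  assumes p: "permutation p" and b: "b \<notin> orbit p a"
  shows "orbit p a \<subseteq> orbit (Transposition.transpose a b \<circ> p) a"
proof
  let ?q = "Transposition.transpose a b \<circ> p"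
  have reach: "p y \<in> orbit ?q a" if "y = a \<or> y \<in> orbit ?q a" "p y \<in> orbit p a" for y
  proof (cases "p y = a")
    case True
    then show ?thesis
      using permutation_self_in_orbit[OF permutation_transpose_comp[OF p]] by simp
  next
    case False
    moreover have "p y \<noteq> b" using that(2) b by blast
    ultimately have "?q y = p y" by simp
    then show ?thesis using that(1) by (metis comp_apply orbit.base orbit.step)
  qed
  fix y assume "y \<in> orbit p a"
  then show "y \<in> orbit ?q a"
  proof induct
    case base
    show ?case by (rule reach) (auto intro: orbit.base)
  next
    case (step y)
    then show ?case by (intro reach) (blast intro: orbit.step)+
  qed
qed

lemma orbit_transpose_comp_merge:
  assumes p: "permutation p" and ab: "b \<notin> orbit p a" and x: "x \<in> orbit p a \<union> orbit p b"
  shows "orbit (Transposition.transpose a b \<circ> p) x = orbit p a \<union> orbit p b"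
proof -
  let ?q = "Transposition.transpose a b \<circ> p"
  have q: "permutation ?q" by (rule permutation_transpose_comp[OF p])
  have a_in: "a \<in> orbit p a" and b_in: "b \<in> orbit p b"
    by (simp_all add: permutation_self_in_orbit[OF p])
  have ba: "a \<notin> orbit p b"
    using ab b_in orbit_eq_of_mem[OF p] by metis
  have A_sub: "orbit p a \<subseteq> orbit ?q a"
    by (rule orbit_subset_orbit_transpose_comp[OF p ab])
  have "inv p a \<in> orbit p a"
    using orbit_inv_eq[OF p] by (metis orbit.base)
  moreover have "p (inv p a) = a"
    by (meson bij_inv_eq_iff permutation_bijective[OF p])
  ultimately have "b \<in> orbit ?q a"
    using A_sub by (metis comp_apply orbit.step subsetD transpose_apply_first)
  then have "orbit ?q b = orbit ?q a"
    by (rule orbit_eq_of_mem[OF q])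
  moreover have "orbit p b \<subseteq> orbit ?q b"
    using orbit_subset_orbit_transpose_comp[OF p ba] by (simp add: transpose_commute)
  moreover have "orbit ?q a \<subseteq> orbit p a \<union> orbit p b"
  proof (rule orbit_subset_of_closed)
    fix y assume "y \<in> orbit p a \<union> orbit p b"
    then have "p y \<in> orbit p a \<union> orbit p b" by (auto intro: orbit.step)
    then show "?q y \<in> orbit p a \<union> orbit p b"
      using a_in b_in by (auto simp: Transposition.transpose_def)
  qed (use a_in in simp)
  ultimately have "orbit ?q a = orbit p a \<union> orbit p b"
    using A_sub by blast
  then show ?thesis
    using x orbit_eq_of_mem[OF q] by metis
qed

lemma orbit_transpose_comp_split:
  fixes p :: "'a \<Rightarrow> 'a"
  assumes p: "permutation p" and z: "z \<noteq> z'" "z' \<in> orbit p z"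
  shows "orbit (Transposition.transpose z z' \<circ> p) z = (\<lambda>t. (p ^^ t) z) ` {..<funpow_dist1 p z z'}"
proof -
  let ?q = "Transposition.transpose z z' \<circ> p"
  define r where "r = funpow_dist1 p z z'"
  have avoid: "(p ^^ t) z \<noteq> z" "(p ^^ t) z \<noteq> z'" if "0 < t" "t < r" for t
    using that funpow_neq_less_funpow_dist1[OF z(2), of t 0] funpow_dist1_least[of t p z z']
    by (auto simp: r_def)
  have q_eq_p: "(?q ^^ t) z = (p ^^ t) z" if "t < r" for t
    using that
  proof (induction t)
    case (Suc t)
    then show ?case using avoid[of "Suc t"] by simp
  qed simp
  have "(?q ^^ r) z = ?q ((?q ^^ (r - 1)) z)"
    by (metis Suc_diff_1 comp_apply funpow.simps(2) r_def zero_less_Suc)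
  also have "\<dots> = Transposition.transpose z z' ((p ^^ r) z)"
    by (simp add: q_eq_p r_def)
  also have "\<dots> = z"
    using funpow_dist1_prop[OF z(2)] by (simp add: r_def)
  finally have "orbit ?q z = {(?q ^^ t) z | t. t < r}"
    by (intro orbit_altdef_bounded) (simp_all add: r_def)
  also have "\<dots> = (\<lambda>t. (p ^^ t) z) ` {..<r}"
    using q_eq_p by (auto simp: image_def) (metis q_eq_p)
  finally show ?thesis by (simp add: r_def)
qed

lemma card_orbit_transpose_comp_split:
  assumes "permutation p" "z \<noteq> z'" "z' \<in> orbit p z"
  shows "card (orbit (Transposition.transpose z z' \<circ> p) z) = funpow_dist1 p z z'"
  using inj_on_funpow_dist1[OF assms(3)]
  by (simp add: orbit_transpose_comp_split[OF assms] card_image atLeast0LessThan)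

lemma orbit_transpose_comp_psubset:
  assumes p: "permutation p" and ab: "a \<noteq> b" "b \<in> orbit p a" and x: "x \<in> orbit p a"
  shows "orbit (Transposition.transpose a b \<circ> p) x \<subset> orbit p x"
proof -
  let ?q = "Transposition.transpose a b \<circ> p"
  have q: "permutation ?q" by (rule permutation_transpose_comp[OF p])
  have a_in: "a \<in> orbit p a" by (rule permutation_self_in_orbit[OF p])
  have b_notin: "b \<notin> orbit ?q a"
  proof
    assume "b \<in> orbit ?q a"
    then obtain t where "t < funpow_dist1 p a b" "(p ^^ t) a = b"
      using orbit_transpose_comp_split[OF p ab] by auto
    then show False
      using ab(1) funpow_dist1_least[of t p a b] by (cases "t = 0") auto
  qed
  have "orbit ?q x \<subseteq> orbit p a"
  proof (rule orbit_subset_of_closed[OF x])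
    fix y assume "y \<in> orbit p a"
    then have "p y \<in> orbit p a" by (rule orbit.step)
    then show "?q y \<in> orbit p a"
      using a_in ab(2) by (auto simp: Transposition.transpose_def)
  qed
  moreover have "orbit ?q x \<noteq> orbit p a"
    using b_notin ab(2) a_in orbit_eq_of_mem[OF q] by metis
  ultimately show ?thesis
    using orbit_eq_of_mem[OF p x] by auto
qed

lemma orbit_transpose_comp_psubsetE:
  assumes p: "permutation p" and psub: "orbit (Transposition.transpose a b \<circ> p) x \<subset> orbit p x"
  obtains z i where "{z, (p ^^ card (orbit (Transposition.transpose a b \<circ> p) x)) z} = {a, b}"
    and "i < card (orbit (Transposition.transpose a b \<circ> p) x)" and "(p ^^ i) z = x"
proof -
  let ?q = "Transposition.transpose a b \<circ> p"
  have q: "permutation ?q" by (rule permutation_transpose_comp[OF p])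
  have "a \<noteq> b"
    using psub by auto
  obtain z z' where zz: "{z, z'} = {a, b}" "z \<noteq> z'" and z_in: "z \<in> orbit ?q x"
  proof -
    have "a \<in> orbit ?q x \<or> b \<in> orbit ?q x"
    proof (rule ccontr)
      assume "\<not> ?thesis"
      then have "orbit (Transposition.transpose a b \<circ> ?q) x = orbit ?q x"
        by (intro orbit_transpose_comp_eq q) auto
      then show False
        using psub by (simp add: comp_assoc[symmetric])
    qed
    then show ?thesis
      using that[of a b] that[of b a] \<open>a \<noteq> b\<close> by auto
  qed
  have tr: "Transposition.transpose z z' = Transposition.transpose a b"
    using zz by (metis doubleton_eq_iff transpose_commute)
  have Oq: "orbit ?q z = orbit ?q x" by (rule orbit_eq_of_mem[OF q z_in])
  have Op: "orbit p z = orbit p x"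
    using z_in psub orbit_eq_of_mem[OF p] by blast
  have z'_in: "z' \<in> orbit p z"
  proof (rule ccontr)
    assume "z' \<notin> orbit p z"
    then have "orbit ?q z = orbit p z \<union> orbit p z'"
      using orbit_transpose_comp_merge[OF p, of z' z z] permutation_self_in_orbit[OF p] tr
      by auto
    then show False
      using Oq Op psub by blast
  qed
  have r: "funpow_dist1 p z z' = card (orbit ?q x)"
    using card_orbit_transpose_comp_split[OF p zz(2) z'_in] tr Oq by simp
  have "x \<in> orbit ?q z"
    using Oq permutation_self_in_orbit[OF q] by simp
  then obtain i where "i < card (orbit ?q x)" "(p ^^ i) z = x"
    using orbit_transpose_comp_split[OF p zz(2) z'_in] tr r by auto
  moreover have "(p ^^ card (orbit ?q x)) z = z'"
    using funpow_dist1_prop[OF z'_in] r by simp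
  ultimately show ?thesis
    using that zz(1) by metis
qed

lemma card_transps_split_orbit_le:
  assumes p: "permutation p"
  shows "card {t \<in> transps n. orbit (transp_perm t \<circ> p) x \<subset> orbit p x
                 \<and> card (orbit (transp_perm t \<circ> p) x) = j} \<le> j"
proof -
  define D where "D = (\<lambda>i. inv (p ^^ i) x) ` {..<j}"
  define pair where "pair c = (min c ((p ^^ j) c), max c ((p ^^ j) c))" for c
  have "{t \<in> transps n. orbit (transp_perm t \<circ> p) x \<subset> orbit p x
           \<and> card (orbit (transp_perm t \<circ> p) x) = j} \<subseteq> pair ` D"
  proof
    fix t assume t: "t \<in> {t \<in> transps n. orbit (transp_perm t \<circ> p) x \<subset> orbit p x
                              \<and> card (orbit (transp_perm t \<circ> p) x) = j}"
    obtain a b where ab: "t = (a, b)" "a < b"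
      using t by (cases t) (auto simp: transps_def)
    have psub: "orbit (Transposition.transpose a b \<circ> p) x \<subset> orbit p x"
      and card: "card (orbit (Transposition.transpose a b \<circ> p) x) = j"
      using t ab by (simp_all add: transp_perm_def)
    obtain z i where z: "{z, (p ^^ j) z} = {a, b}" and i: "i < j" "(p ^^ i) z = x"
      using orbit_transpose_comp_psubsetE[OF p psub] unfolding card .
    have "inj (p ^^ i)"
      using permutation_bijective[OF p] by (simp add: bij_is_inj inj_fn)
    then have "z \<in> D"
      using i by (auto simp: D_def inv_f_f intro!: image_eqI[of _ _ i])
    moreover have "t = pair z"
      using z ab by (auto simp: pair_def doubleton_eq_iff)
    ultimately show "t \<in> pair ` D" by blast
  qed
  then have "card {t \<in> transps n. orbit (transp_perm t \<circ> p) x \<subset> orbit p x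
                  \<and> card (orbit (transp_perm t \<circ> p) x) = j} \<le> card (pair ` D)"
    by (rule card_mono[rotated]) (simp add: D_def)
  also have "\<dots> \<le> card D"
    by (rule card_image_le) (simp add: D_def)
  also have "\<dots> \<le> j"
    unfolding D_def using card_image_le[of "{..<j}"] by simp
  finally show ?thesis .
qed

section \<open>Cycles and components of the random transposition process\<close>

lemma perm_of_Nil [simp]: "perm_of [] = id"
  by (simp add: perm_of_def)

lemma perm_of_snoc: "perm_of (ts @ [t]) = transp_perm t \<circ> perm_of ts"
  by (simp add: perm_of_def)

lemma permutation_perm_of: "permutation (perm_of ts)"
proof (induction ts rule: rev_induct)
  case (snoc t ts)
  then show ?case
    unfolding perm_of_snoc transp_perm_def by (rule permutation_transpose_comp)
qed (simp add: permutation_id)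

lemma perm_of_permutes: "set ts \<subseteq> transps n \<Longrightarrow> perm_of ts permutes {1..n}"
proof (induction ts rule: rev_induct)
  case (snoc t ts)
  then have "fst t \<in> {1..n}" "snd t \<in> {1..n}"
    by (auto simp: transps_def)
  then show ?case
    unfolding perm_of_snoc transp_perm_def using snoc
    by (intro permutes_compose permutes_swap_id) auto
qed (simp add: permutes_id)

lemma edge_rel_snoc: "edge_rel (ts @ [t]) = edge_rel ts \<union> {(x, y). {x, y} = {fst t, snd t}}"
  by (auto simp: edge_rel_def)

lemma sym_edge_rel: "sym (edge_rel ts)"
  by (auto simp: edge_rel_def sym_def insert_commute)

lemma component_self: "x \<in> component ts x"
  by (simp add: component_def)

lemma component_eq_of_mem: "y \<in> component ts x \<Longrightarrow> component ts y = component ts x"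
  using sym_rtrancl[OF sym_edge_rel, of ts] unfolding component_def
  by (auto dest: symD intro: rtrancl_trans)

lemma component_subset_component_snoc: "component ts x \<subseteq> component (ts @ [t]) x"
  unfolding component_def edge_rel_snoc by (auto intro: rtrancl_mono[THEN subsetD, rotated])

lemma component_snoc_subset:
  assumes "x \<in> S" and closed: "\<And>y. y \<in> S \<Longrightarrow> component ts y \<subseteq> S"
    and "fst t \<in> S \<longleftrightarrow> snd t \<in> S"
  shows "component (ts @ [t]) x \<subseteq> S"
proof
  fix y assume "y \<in> component (ts @ [t]) x"
  then have "(x, y) \<in> (edge_rel (ts @ [t]))\<^sup>*" by (simp add: component_def)
  then show "y \<in> S"
  proof induct
    case (step y z)
    show ?case
    proof (cases "(y, z) \<in> edge_rel ts")
      case True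
      then have "z \<in> component ts y" by (simp add: component_def)
      then show ?thesis using closed step.hyps(3) by blast
    next
      case False
      then have "{y, z} = {fst t, snd t}" using step.hyps(2) by (simp add: edge_rel_snoc)
      then show ?thesis using step.hyps(3) assms(3) by (auto simp: doubleton_eq_iff)
    qed
  qed (rule assms(1))
qed

lemma perm_of_in_component: "perm_of ts x \<in> component ts x"
proof (induction ts arbitrary: x rule: rev_induct)
  case (snoc t ts)
  have y: "perm_of ts x \<in> component (ts @ [t]) x"
    using snoc component_subset_component_snoc by blast
  have "(fst t, snd t) \<in> edge_rel (ts @ [t])" "(snd t, fst t) \<in> edge_rel (ts @ [t])"
    by (auto simp: edge_rel_snoc)
  then have "transp_perm t (perm_of ts x) \<in> component (ts @ [t]) x"
    using y unfolding component_def transp_perm_def Transposition.transpose_def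
    by (auto intro: rtrancl_into_rtrancl)
  then show ?case by (simp add: perm_of_snoc)
qed (simp add: component_self)

lemma orbit_perm_of_subset_component: "orbit (perm_of ts) x \<subseteq> component ts x"
  by (rule orbit_subset_of_closed[OF component_self])
    (metis component_eq_of_mem perm_of_in_component)

lemma finite_transps: "finite (transps n)"
  by (rule finite_subset[of _ "{1..n} \<times> {1..n}"]) (auto simp: transps_def)

lemma transps_nonempty: "n \<ge> 2 \<Longrightarrow> transps n \<noteq> {}"
proof -
  assume "n \<ge> 2"
  then have "(1, 2) \<in> transps n" by (simp add: transps_def)
  then show ?thesis by blast
qed

lemma card_transps: "2 * card (transps n) = n * (n - 1)"
proof (induction n)
  case 0
  have "transps 0 = {}" by (auto simp: transps_def)
  then show ?case by simp
next
  case (Suc n)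
  have "transps (Suc n) = transps n \<union> (\<lambda>a. (a, Suc n)) ` {1..n}"
    by (auto simp: transps_def)
  moreover have "transps n \<inter> (\<lambda>a. (a, Suc n)) ` {1..n} = {}"
    by (auto simp: transps_def)
  moreover have "card ((\<lambda>a. (a, Suc n)) ` {1..n}) = n"
    by (subst card_image) (auto simp: inj_on_def)
  ultimately have "card (transps (Suc n)) = card (transps n) + n"
    using finite_transps by (simp add: card_Un_disjoint)
  then show ?case
    using Suc.IH by (cases n) (auto simp: algebra_simps)
qed

section \<open>Small proper cycles\<close>

text \<open>A cycle C gets total weight 1, spread as 1/|C| over its points, so that summing over V
  counts cycles.\<close>

definition small_proper_cycle_weight :: "nat \<Rightarrow> (nat \<times> nat) list \<Rightarrow> nat \<Rightarrow> real" where
  "small_proper_cycle_weight k ts x =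
     (if card (orbit (perm_of ts) x) < k \<and> orbit (perm_of ts) x \<noteq> component ts x
      then 1 / card (orbit (perm_of ts) x) else 0)"

definition small_proper_cycles :: "nat \<Rightarrow> nat \<Rightarrow> (nat \<times> nat) list \<Rightarrow> real" where
  "small_proper_cycles n k ts = (\<Sum>x\<in>{1..n}. small_proper_cycle_weight k ts x)"

definition split_weight :: "nat \<Rightarrow> ('a \<Rightarrow> 'a) \<Rightarrow> ('a \<Rightarrow> 'a) \<Rightarrow> 'a \<Rightarrow> real" where
  "split_weight k p q x =
     (if orbit q x \<subset> orbit p x \<and> card (orbit q x) < k then 1 / card (orbit q x) else 0)"

lemma small_proper_cycle_weight_nonneg: "small_proper_cycle_weight k ts x \<ge> 0"
  by (simp add: small_proper_cycle_weight_def)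

lemma split_weight_nonneg: "split_weight k p q x \<ge> 0"
  by (simp add: split_weight_def)

lemma small_proper_cycles_Nil: "small_proper_cycles n k [] = 0"
proof -
  have "orbit (perm_of []) x = {x}" "component [] x = {x}" for x
    by (simp_all add: orbit_eq_singleton_iff component_def edge_rel_def)
  then show ?thesis
    by (simp add: small_proper_cycles_def small_proper_cycle_weight_def)
qed

lemma sum_small_proper_cycle_weight_orbit:
  "(\<Sum>y\<in>orbit (perm_of ts) x. small_proper_cycle_weight k ts y)
     = (if card (orbit (perm_of ts) x) < k \<and> orbit (perm_of ts) x \<noteq> component ts x then 1 else 0)"
proof -
  let ?O = "orbit (perm_of ts) x"
  have x_in: "x \<in> ?O" by (rule permutation_self_in_orbit[OF permutation_perm_of])
  define c :: real where "c = (if card ?O < k \<and> ?O \<noteq> component ts x then 1 else 0)"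
  have "small_proper_cycle_weight k ts y = c / card ?O" if "y \<in> ?O" for y
  proof -
    have "orbit (perm_of ts) y = ?O" "component ts y = component ts x"
      using that orbit_eq_of_mem[OF permutation_perm_of] orbit_perm_of_subset_component
        component_eq_of_mem by blast+
    then show ?thesis
      by (simp add: small_proper_cycle_weight_def c_def)
  qed
  then have "(\<Sum>y\<in>?O. small_proper_cycle_weight k ts y) = (\<Sum>y\<in>?O. c / card ?O)"
    by (rule sum.cong[OF refl])
  also have "\<dots> = c"
    using finite_orbit[OF x_in] x_in by (auto simp: card_gt_0_iff)
  finally show ?thesis
    by (simp add: c_def)
qed

lemma card_VG_diff_VX_le: "card (VG n ts k - VX n ts k) \<le> k * small_proper_cycles n k ts"
proof -
  let ?D = "VG n ts k - VX n ts k"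
  have D_sub: "?D \<subseteq> {1..n}" by (auto simp: VG_def)
  have one_le: "1 \<le> k * small_proper_cycle_weight k ts x" if "x \<in> ?D" for x
  proof -
    let ?O = "orbit (perm_of ts) x"
    have "card ?O > 0"
      using finite_orbit permutation_self_in_orbit[OF permutation_perm_of]
      by (metis card_gt_0_iff empty_iff)
    moreover have "card ?O < k" "card (component ts x) \<ge> k"
      using that by (auto simp: VG_def VX_def)
    ultimately show ?thesis
      by (auto simp: small_proper_cycle_weight_def field_simps)
  qed
  have "card ?D = (\<Sum>x\<in>?D. 1::real)" by simp
  also have "\<dots> \<le> (\<Sum>x\<in>?D. k * small_proper_cycle_weight k ts x)"
    by (rule sum_mono) (rule one_le)
  also have "\<dots> \<le> (\<Sum>x\<in>{1..n}. k * small_proper_cycle_weight k ts x)"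
    by (intro sum_mono2 D_sub) (simp_all add: small_proper_cycle_weight_nonneg)
  finally show ?thesis
    by (simp add: small_proper_cycles_def sum_distrib_left)
qed

lemma sum_split_weight_le:
  assumes p: "permutation p"
  shows "(\<Sum>t\<in>transps n. split_weight k p (transp_perm t \<circ> p) x) \<le> k"
proof -
  let ?O = "\<lambda>t. orbit (transp_perm t \<circ> p) x"
  let ?P = "\<lambda>t j. ?O t \<subset> orbit p x \<and> card (?O t) = j"
  have split_weight_eq:
    "split_weight k p (transp_perm t \<circ> p) x = (\<Sum>j\<in>{1..<k}. if ?P t j then 1 / j else 0)" for t
  proof -
    have "card (?O t) \<ge> 1"
      using finite_orbit permutation_self_in_orbit[OF permutation_transpose_comp[OF p]]
      by (metis One_nat_def Suc_leI card_gt_0_iff empty_iff transp_perm_def)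
    then have "split_weight k p (transp_perm t \<circ> p) x
        = (if card (?O t) \<in> {1..<k} then (if ?O t \<subset> orbit p x then 1 / card (?O t) else 0) else 0)"
      by (auto simp: split_weight_def)
    also have "\<dots> = (\<Sum>j\<in>{1..<k}. if j = card (?O t) then (if ?O t \<subset> orbit p x then 1 / j else 0) else 0)"
      by (rule sum.delta[symmetric]) simp
    also have "\<dots> = (\<Sum>j\<in>{1..<k}. if ?P t j then 1 / j else 0)"
      by (intro sum.cong) auto
    finally show ?thesis .
  qed
  have "(\<Sum>t\<in>transps n. split_weight k p (transp_perm t \<circ> p) x)
      = (\<Sum>t\<in>transps n. \<Sum>j\<in>{1..<k}. if ?P t j then 1 / j else 0)"
    by (simp only: split_weight_eq)
  also have "\<dots> = (\<Sum>j\<in>{1..<k}. \<Sum>t\<in>transps n. if ?P t j then 1 / j else 0)"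
    by (rule sum.swap)
  also have "\<dots> = (\<Sum>j\<in>{1..<k}. card {t \<in> transps n. ?P t j} / j)"
    by (intro sum.cong refl) (simp add: sum.inter_filter[symmetric] finite_transps)
  also have "\<dots> \<le> (\<Sum>j\<in>{1..<k}. j / j)"
    by (intro sum_mono divide_right_mono) (simp_all add: card_transps_split_orbit_le[OF p])
  also have "\<dots> \<le> k" by simp
  finally show ?thesis .
qed

lemma small_proper_cycle_weight_snoc_outside:
  assumes x: "x \<notin> orbit (perm_of ts) a \<union> orbit (perm_of ts) b"
  shows "small_proper_cycle_weight k (ts @ [(a, b)]) x \<le> small_proper_cycle_weight k ts x"
proof -
  let ?p = "perm_of ts"
  have p: "permutation ?p" by (rule permutation_perm_of)
  have ab: "a \<notin> orbit ?p x" "b \<notin> orbit ?p x"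
    using x orbit_eq_of_mem[OF p, of a x] orbit_eq_of_mem[OF p, of b x]
      permutation_self_in_orbit[OF p, of x] by auto
  have "orbit (perm_of (ts @ [(a, b)])) x = orbit ?p x"
    using orbit_transpose_comp_eq[OF p ab] by (simp add: perm_of_snoc transp_perm_def)
  moreover have "component (ts @ [(a, b)]) x = component ts x" if "orbit ?p x = component ts x"
  proof
    show "component (ts @ [(a, b)]) x \<subseteq> component ts x"
    proof (rule component_snoc_subset[OF component_self])
      show "component ts y \<subseteq> component ts x" if "y \<in> component ts x" for y
        using component_eq_of_mem[OF that] by simp
      show "fst (a, b) \<in> component ts x \<longleftrightarrow> snd (a, b) \<in> component ts x"
        using ab that by simp
    qed
  qed (rule component_subset_component_snoc)
  ultimately show ?thesis
    unfolding small_proper_cycle_weight_def by (cases "orbit ?p x = component ts x") simp_all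
qed

lemma small_proper_cycle_weight_snoc_split:
  assumes ab: "a \<noteq> b" "b \<in> orbit (perm_of ts) a"
  shows "small_proper_cycle_weight k (ts @ [(a, b)]) x
       \<le> small_proper_cycle_weight k ts x + split_weight k (perm_of ts) (perm_of (ts @ [(a, b)])) x"
proof (cases "x \<in> orbit (perm_of ts) a")
  case True
  then have "small_proper_cycle_weight k (ts @ [(a, b)]) x
      \<le> split_weight k (perm_of ts) (perm_of (ts @ [(a, b)])) x"
    using orbit_transpose_comp_psubset[OF permutation_perm_of ab]
    by (simp add: small_proper_cycle_weight_def split_weight_def perm_of_snoc transp_perm_def)
  then show ?thesis
    using small_proper_cycle_weight_nonneg[of k ts x] by linarith
next
  case False
  then have "x \<notin> orbit (perm_of ts) a \<union> orbit (perm_of ts) b"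
    using orbit_eq_of_mem[OF permutation_perm_of ab(2)] by simp
  then show ?thesis
    using small_proper_cycle_weight_snoc_outside split_weight_nonneg by (metis add_increasing2)
qed

lemma sum_small_proper_cycle_weight_snoc_merge:
  assumes ab: "b \<notin> orbit (perm_of ts) a"
  defines "AB \<equiv> orbit (perm_of ts) a \<union> orbit (perm_of ts) b"
  shows "(\<Sum>x\<in>AB. small_proper_cycle_weight k (ts @ [(a, b)]) x)
       \<le> (\<Sum>x\<in>AB. small_proper_cycle_weight k ts x)"
proof -
  let ?p = "perm_of ts" and ?ts' = "ts @ [(a, b)]"
  let ?A = "orbit ?p a" and ?B = "orbit ?p b"
  have p: "permutation ?p" by (rule permutation_perm_of)
  have merged: "orbit (perm_of ?ts') a = AB"
    using orbit_transpose_comp_merge[OF p ab] permutation_self_in_orbit[OF p]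
    by (simp add: AB_def perm_of_snoc transp_perm_def)
  have disjoint: "?A \<inter> ?B = {}"
    using ab orbit_eq_of_mem[OF p] permutation_self_in_orbit[OF p] by blast
  have finite: "finite ?A" "finite ?B"
    by (simp_all add: finite_orbit permutation_self_in_orbit[OF p])
  have merge_le: "(card ?A < k \<and> ?A \<noteq> component ts a) \<or> (card ?B < k \<and> ?B \<noteq> component ts b)"
    if small: "card AB < k" and proper: "AB \<noteq> component ?ts' a"
  proof -
    have "card ?A < k" "card ?B < k"
      using small finite card_mono[of AB ?A] card_mono[of AB ?B] by (auto simp: AB_def)
    moreover have "?A \<noteq> component ts a \<or> ?B \<noteq> component ts b"
    proof (rule ccontr)
      assume "\<not> ?thesis"
      then have "component ?ts' a \<subseteq> AB"
        unfolding AB_def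
        by (intro component_snoc_subset) (auto simp: component_self dest: component_eq_of_mem)
      moreover have "AB \<subseteq> component ?ts' a"
        using merged orbit_perm_of_subset_component by metis
      ultimately show False
        using proper by blast
    qed
    ultimately show ?thesis by blast
  qed
  have "(\<Sum>x\<in>AB. small_proper_cycle_weight k ?ts' x)
      = (if card AB < k \<and> AB \<noteq> component ?ts' a then 1 else 0)"
    using sum_small_proper_cycle_weight_orbit[where ts = ?ts' and x = a] by (simp add: merged)
  also have "\<dots> \<le> (if card ?A < k \<and> ?A \<noteq> component ts a then 1 else 0)
      + (if card ?B < k \<and> ?B \<noteq> component ts b then 1 else 0)"
    using merge_le by auto
  also have "\<dots> = (\<Sum>x\<in>?A. small_proper_cycle_weight k ts x) + (\<Sum>x\<in>?B. small_proper_cycle_weight k ts x)"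
    by (simp only: sum_small_proper_cycle_weight_orbit)
  also have "\<dots> = (\<Sum>x\<in>AB. small_proper_cycle_weight k ts x)"
    unfolding AB_def by (rule sum.union_disjoint[symmetric]) (use finite disjoint in auto)
  finally show ?thesis .
qed

lemma small_proper_cycles_snoc_le:
  assumes ts: "set ts \<subseteq> transps n" and t: "(a, b) \<in> transps n"
  shows "small_proper_cycles n k (ts @ [(a, b)])
       \<le> small_proper_cycles n k ts
         + (\<Sum>x\<in>{1..n}. split_weight k (perm_of ts) (perm_of (ts @ [(a, b)])) x)"
proof -
  let ?p = "perm_of ts"
  let ?w = "small_proper_cycle_weight k ts" and ?w' = "small_proper_cycle_weight k (ts @ [(a, b)])"
  let ?s = "split_weight k ?p (perm_of (ts @ [(a, b)]))"
  have ab: "a \<noteq> b" "a \<in> {1..n}" "b \<in> {1..n}"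
    using t by (auto simp: transps_def)
  show ?thesis
  proof (cases "b \<in> orbit ?p a")
    case True
    then have "?w' x \<le> ?w x + ?s x" for x
      by (rule small_proper_cycle_weight_snoc_split[OF ab(1)])
    then have "(\<Sum>x\<in>{1..n}. ?w' x) \<le> (\<Sum>x\<in>{1..n}. ?w x + ?s x)"
      by (rule sum_mono)
    then show ?thesis
      by (simp add: small_proper_cycles_def sum.distrib)
  next
    case False
    let ?AB = "orbit ?p a \<union> orbit ?p b"
    have AB_sub: "?AB \<subseteq> {1..n}"
      using permutes_orbit_subset[OF perm_of_permutes[OF ts]] ab by blast
    have "(\<Sum>x\<in>{1..n}. ?w' x) = (\<Sum>x\<in>{1..n} - ?AB. ?w' x) + (\<Sum>x\<in>?AB. ?w' x)"
      by (rule sum.subset_diff[OF AB_sub finite_atLeastAtMost])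
    also have "\<dots> \<le> (\<Sum>x\<in>{1..n} - ?AB. ?w x) + (\<Sum>x\<in>?AB. ?w x)"
      using sum_small_proper_cycle_weight_snoc_merge[OF False]
      by (intro add_mono[OF sum_mono]) (auto intro: small_proper_cycle_weight_snoc_outside)
    also have "\<dots> = (\<Sum>x\<in>{1..n}. ?w x)"
      by (rule sum.subset_diff[OF AB_sub finite_atLeastAtMost, symmetric])
    moreover have "0 \<le> (\<Sum>x\<in>{1..n}. ?s x)"
      by (intro sum_nonneg split_weight_nonneg)
    ultimately show ?thesis
      by (simp add: small_proper_cycles_def)
  qed
qed

lemma sum_small_proper_cycles_snoc_le:
  assumes ts: "set ts \<subseteq> transps n"
  shows "(\<Sum>t\<in>transps n. small_proper_cycles n k (ts @ [t]))
       \<le> card (transps n) * small_proper_cycles n k ts + n * k"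
proof -
  let ?T = "transps n" and ?p = "perm_of ts"
  have "(\<Sum>t\<in>?T. small_proper_cycles n k (ts @ [t]))
      \<le> (\<Sum>t\<in>?T. small_proper_cycles n k ts
                      + (\<Sum>x\<in>{1..n}. split_weight k ?p (transp_perm t \<circ> ?p) x))"
  proof (rule sum_mono)
    fix t assume "t \<in> ?T"
    then show "small_proper_cycles n k (ts @ [t])
        \<le> small_proper_cycles n k ts + (\<Sum>x\<in>{1..n}. split_weight k ?p (transp_perm t \<circ> ?p) x)"
      using small_proper_cycles_snoc_le[OF ts] by (cases t) (simp add: perm_of_snoc)
  qed
  also have "\<dots> = card ?T * small_proper_cycles n k ts
      + (\<Sum>t\<in>?T. \<Sum>x\<in>{1..n}. split_weight k ?p (transp_perm t \<circ> ?p) x)"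
    by (simp add: sum.distrib)
  also have "\<dots> = card ?T * small_proper_cycles n k ts
      + (\<Sum>x\<in>{1..n}. \<Sum>t\<in>?T. split_weight k ?p (transp_perm t \<circ> ?p) x)"
    by (subst sum.swap) (rule refl)
  also have "\<dots> \<le> card ?T * small_proper_cycles n k ts + (\<Sum>x\<in>{1..n}. real k)"
    by (intro add_left_mono sum_mono sum_split_weight_le permutation_perm_of)
  finally show ?thesis
    by simp
qed

lemma average_small_proper_cycles_snoc_le:
  assumes n: "n \<ge> 2" and ts: "set ts \<subseteq> transps n"
  shows "(\<Sum>t\<in>transps n. small_proper_cycles n k (ts @ [t])) / card (transps n)
       \<le> small_proper_cycles n k ts + 2 * real k / (real n - 1)"
proof -
  let ?T = "transps n"
  have card_eq: "real (card ?T) = n * (n - 1) / 2"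
    using arg_cong[OF card_transps[of n], of real] n by (simp add: of_nat_diff)
  have card_pos: "real (card ?T) > 0"
    using n by (simp add: card_eq)
  have "(\<Sum>t\<in>?T. small_proper_cycles n k (ts @ [t])) / card ?T
      \<le> (card ?T * small_proper_cycles n k ts + n * k) / card ?T"
    using sum_small_proper_cycles_snoc_le[OF ts] card_pos by (intro divide_right_mono) simp_all
  also have "\<dots> = small_proper_cycles n k ts + n * k / card ?T"
    using card_pos by (simp add: add_divide_distrib)
  also have "n * k / card ?T = 2 * real k / (real n - 1)"
    unfolding card_eq using n by (simp add: field_simps)
  finally show ?thesis .
qed

lemma expectation_small_proper_cycles_le:
  assumes "n \<ge> 2"
  shows "measure_pmf.expectation (transp_seq_pmf n s) (small_proper_cycles n k)
       \<le> s * (2 * real k / (real n - 1))"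
  unfolding transp_seq_pmf_def
  by (rule expectation_replicate_pmf_of_set_le[OF finite_transps transps_nonempty[OF assms]])
    (simp_all add: small_proper_cycles_Nil average_small_proper_cycles_snoc_le[OF assms])

theorem lemma2p2:
  fixes n k s :: nat
  assumes "n \<ge> 2"
  shows "measure_pmf.expectation (transp_seq_pmf n s)
           (\<lambda>ts. real (card (VG n ts k - VX n ts k)))
         \<le> 4 * real s * real k ^ 2 / (real n - 1)"
proof -
  let ?M = "transp_seq_pmf n s"
  have "finite (set_pmf ?M)"
    unfolding transp_seq_pmf_def using finite_transps transps_nonempty[OF assms]
    by (intro finite_set_replicate_pmf) simp
  then have "measure_pmf.expectation ?M (\<lambda>ts. real (card (VG n ts k - VX n ts k)))
      \<le> measure_pmf.expectation ?M (\<lambda>ts. k * small_proper_cycles n k ts)"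
    by (intro integral_mono integrable_measure_pmf_finite card_VG_diff_VX_le)
  also have "\<dots> = k * measure_pmf.expectation ?M (small_proper_cycles n k)"
    by simp
  also have "\<dots> \<le> k * (s * (2 * real k / (real n - 1)))"
    by (intro mult_left_mono expectation_small_proper_cycles_le assms) simp
  also have "\<dots> = 2 * real s * real k ^ 2 / (real n - 1)"
    by (simp add: power2_eq_square)
  also have "\<dots> \<le> 4 * real s * real k ^ 2 / (real n - 1)"
    using assms by (intro divide_right_mono) auto
  finally show ?thesis .
qed

end
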